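(* Let $x=(x_1,\ldots,x_n)$ and $y=(y_1,\ldots,y_m)$ be observed samples, let $\mathbb{P}^{x,y}$ be the posterior distribution of $(P_1,P_2)$ given $\mathcal{D}_{n,m}=\{x,y\}$, with expectation $\mathbb{E}^{x,y}$. Let $d$ be a distance between probability measures, $M=\sup_{P_1,P_2}d(P_1,P_2)\in(0,\infty]$, $w:[0,M)\to(0,\infty]$ a probability density on $[0,M)$ with cumulative distribution function $W$, and $\mathrm{WIKS}(\mathcal{D}_{n,m})=\int_0^M w(\varepsilon)\,\mathbb{P}^{x,y}(d(P_1,P_2)>\varepsilon)\,d\varepsilon$. Consider testing $H_0:P_1=P_2$ with decision space $\{0,1\}$ ($0$ = accept $H_0$, $1$ = reject $H_0$) and loss function $$L((P_1,P_2),a)=\begin{cases} c_0\,W(d(P_1,P_2)), & a=0,\\ c_1\,[1-W(d(P_1,P_2))], & a=1,\end{cases}$$ where $c_0,c_1>0$. Then the Bayes rule (the decision minimizing the posterior expected loss $\mathbb{E}^{x,y}[L((P_1,P_2),a)]$) is to reject $H_0$ if and only if $$\mathrm{WIKS}(\mathcal{D}_{n,m})>c,\qquad c=\frac{c_1}{c_1+c_0}.$$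
   Context: Bayesian two-sample setting: $(P_1,P_2)$ is a random pair of probability distributions with some prior; conditionally on $(P_1,P_2)$, $x$ is an i.i.d. sample from $P_1$ and $y$ an i.i.d. sample from $P_2$, independently. *)

theory Defs
  imports "HOL-Probability.Probability"
begin

text \<open>Parameter space: pairs (P1,P2) of elements of a type 'm (e.g. probability measures).
  The posterior is a probability measure Q on 'm \<times> 'm; d is the distance.\<close>

definition sup_dist :: "('m \<Rightarrow> 'm \<Rightarrow> real) \<Rightarrow> ereal" where
  "sup_dist d = (SUP p. ereal (d (fst p) (snd p)))"

definition zero_to :: "ereal \<Rightarrow> real set" where
  "zero_to M = {e. 0 \<le> e \<and> ereal e < M}"

definition cdf_w :: "(real \<Rightarrow> ennreal) \<Rightarrow> ereal \<Rightarrow> real \<Rightarrow> real" where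
  "cdf_w w M t = enn2real (\<integral>\<^sup>+ e. w e * indicator (zero_to M \<inter> {..t}) e \<partial>lborel)"

definition WIKS :: "('m \<times> 'm) measure \<Rightarrow> ('m \<Rightarrow> 'm \<Rightarrow> real) \<Rightarrow> (real \<Rightarrow> ennreal) \<Rightarrow> real" where
  "WIKS Q d w = enn2real (\<integral>\<^sup>+ e. w e * indicator (zero_to (sup_dist d)) e
       * emeasure Q {p \<in> space Q. d (fst p) (snd p) > e} \<partial>lborel)"

definition loss :: "real \<Rightarrow> real \<Rightarrow> ('m \<Rightarrow> 'm \<Rightarrow> real) \<Rightarrow> (real \<Rightarrow> ennreal) \<Rightarrow> 'm \<times> 'm \<Rightarrow> nat \<Rightarrow> real" where
  "loss c0 c1 d w p a =
     (if a = 0 then c0 * cdf_w w (sup_dist d) (d (fst p) (snd p))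
      else c1 * (1 - cdf_w w (sup_dist d) (d (fst p) (snd p))))"

definition post_risk :: "('m \<times> 'm) measure \<Rightarrow> real \<Rightarrow> real \<Rightarrow> ('m \<Rightarrow> 'm \<Rightarrow> real) \<Rightarrow> (real \<Rightarrow> ennreal) \<Rightarrow> nat \<Rightarrow> real" where
  "post_risk Q c0 c1 d w a = (\<integral>p. loss c0 c1 d w p a \<partial>Q)"

text \<open>The Bayes rule rejects H0 iff rejecting has strictly smaller posterior expected loss
  (on ties it accepts).\<close>
definition bayes_rejects :: "('m \<times> 'm) measure \<Rightarrow> real \<Rightarrow> real \<Rightarrow> ('m \<Rightarrow> 'm \<Rightarrow> real) \<Rightarrow> (real \<Rightarrow> ennreal) \<Rightarrow> bool" where
  "bayes_rejects Q c0 c1 d w \<longleftrightarrow> post_risk Q c0 c1 d w 1 < post_risk Q c0 c1 d w 0"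

end

theory Submission
  imports Defs
begin

text \<open>By Tonelli, integrating the tail probabilities
  \<open>\<P>(d(P\<^sub>1,P\<^sub>2) > \<epsilon>)\<close> against \<open>w\<close> gives the posterior
  mean of \<open>W(d(P\<^sub>1,P\<^sub>2))\<close>, so WIKS is the posterior expectation \<open>E\<close> of \<open>W(d)\<close>.
  The posterior risks of accepting and rejecting are then \<open>c\<^sub>0 E\<close> and \<open>c\<^sub>1 (1 - E)\<close>,
  and the second is smaller iff \<open>E > c\<^sub>1 / (c\<^sub>1 + c\<^sub>0)\<close>.\<close>

lemma zero_to_borel [measurable]: "zero_to M \<in> sets borel"
proof -
  have "zero_to M = {e. 0 \<le> e} \<inter> {e. ereal e < M}"
    by (auto simp: zero_to_def)
  moreover have "{e::real. ereal e < M} \<in> sets borel"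
    by measurable
  ultimately show ?thesis
    by simp
qed

lemma (in sigma_finite_measure) nn_integral_tail_emeasure:
  fixes X :: "'a \<Rightarrow> real" and f :: "real \<Rightarrow> ennreal"
  assumes [measurable]: "X \<in> borel_measurable M" "f \<in> borel_measurable borel"
  shows "(\<integral>\<^sup>+ e. f e * emeasure M {x \<in> space M. e < X x} \<partial>lborel)
    = (\<integral>\<^sup>+ x. (\<integral>\<^sup>+ e. f e * indicator {..X x} e \<partial>lborel) \<partial>M)"
proof -
  interpret pair_sigma_finite M lborel
    by (simp add: pair_sigma_finite_def sigma_finite_measure_axioms lborel.sigma_finite_measure_axioms)
  have "(\<integral>\<^sup>+ e. f e * emeasure M {x \<in> space M. e < X x} \<partial>lborel)
      = (\<integral>\<^sup>+ e. (\<integral>\<^sup>+ x. f e * indicator {x \<in> space M. e < X x} x \<partial>M) \<partial>lborel)"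
    by (intro nn_integral_cong) (simp add: nn_integral_cmult_indicator)
  also have "\<dots> = (\<integral>\<^sup>+ x. (\<integral>\<^sup>+ e. f e * indicator {x \<in> space M. e < X x} x \<partial>lborel) \<partial>M)"
  proof -
    have "(\<lambda>(x, e). f e * indicator {x \<in> space M. e < X x} x) \<in> borel_measurable (M \<Otimes>\<^sub>M lborel)"
    proof (subst measurable_cong)
      fix z :: "'a \<times> real" assume "z \<in> space (M \<Otimes>\<^sub>M lborel)"
      then show "(\<lambda>(x, e). f e * indicator {x \<in> space M. e < X x} x) z
          = f (snd z) * indicator {z \<in> space (M \<Otimes>\<^sub>M lborel). snd z < X (fst z)} z"
        by (cases z) (auto simp: space_pair_measure indicator_def)
    qed measurable
    from Fubini'[OF this] show ?thesis
      by simp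
  qed
  also have "\<dots> = (\<integral>\<^sup>+ x. (\<integral>\<^sup>+ e. f e * indicator {..X x} e \<partial>lborel) \<partial>M)"
  proof (rule nn_integral_cong)
    fix x assume "x \<in> space M"
    then show "(\<integral>\<^sup>+ e. f e * indicator {x \<in> space M. e < X x} x \<partial>lborel)
        = (\<integral>\<^sup>+ e. f e * indicator {..X x} e \<partial>lborel)"
      by (intro nn_integral_cong_AE, use AE_lborel_singleton[of "X x"] in eventually_elim)
        (auto simp: indicator_def)
  qed
  finally show ?thesis .
qed

lemma cdf_w_nonneg: "0 \<le> cdf_w w M t"
  by (simp add: cdf_w_def)

context
  fixes w :: "real \<Rightarrow> ennreal" and M :: ereal
  assumes finite_mass: "(\<integral>\<^sup>+ e. w e * indicator (zero_to M) e \<partial>lborel) < \<infinity>"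
begin

lemma nn_integral_cdf_le_mass:
  "(\<integral>\<^sup>+ e. w e * indicator (zero_to M \<inter> {..t}) e \<partial>lborel)
    \<le> (\<integral>\<^sup>+ e. w e * indicator (zero_to M) e \<partial>lborel)"
  by (intro nn_integral_mono) (auto simp: indicator_def)

lemma ennreal_cdf_w:
  "ennreal (cdf_w w M t) = (\<integral>\<^sup>+ e. w e * indicator (zero_to M \<inter> {..t}) e \<partial>lborel)"
  using nn_integral_cdf_le_mass[of t] finite_mass
  by (simp add: cdf_w_def ennreal_enn2real_if top_unique)

lemma cdf_w_le_mass:
  "cdf_w w M t \<le> enn2real (\<integral>\<^sup>+ e. w e * indicator (zero_to M) e \<partial>lborel)"
  using nn_integral_cdf_le_mass[of t] finite_mass
  by (simp add: cdf_w_def enn2real_mono)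

lemma mono_cdf_w: "mono (cdf_w w M)"
proof (rule monoI)
  fix s t :: real
  assume "s \<le> t"
  then have "(\<integral>\<^sup>+ e. w e * indicator (zero_to M \<inter> {..s}) e \<partial>lborel)
      \<le> (\<integral>\<^sup>+ e. w e * indicator (zero_to M \<inter> {..t}) e \<partial>lborel)"
    by (intro nn_integral_mono) (auto simp: indicator_def)
  then show "cdf_w w M s \<le> cdf_w w M t"
    by (simp add: ennreal_cdf_w[symmetric] cdf_w_nonneg)
qed

lemma borel_measurable_cdf_w_comp [measurable]:
  "X \<in> borel_measurable N \<Longrightarrow> (\<lambda>x. cdf_w w M (X x)) \<in> borel_measurable N"
  using measurable_compose borel_measurable_mono[OF mono_cdf_w] by blast

lemma integrable_cdf_w_comp:
  assumes "finite_measure N" "X \<in> borel_measurable N"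
  shows "integrable N (\<lambda>x. cdf_w w M (X x))"
  using assms cdf_w_nonneg cdf_w_le_mass
  by (intro finite_measure.integrable_const_bound
      [where B = "enn2real (\<integral>\<^sup>+ e. w e * indicator (zero_to M) e \<partial>lborel)"]) auto

end

lemma WIKS_eq_expectation_cdf_w:
  assumes "finite_measure Q"
    and D: "(\<lambda>p. d (fst p) (snd p)) \<in> borel_measurable Q"
    and [measurable]: "w \<in> borel_measurable borel"
    and finite_mass: "(\<integral>\<^sup>+ e. w e * indicator (zero_to (sup_dist d)) e \<partial>lborel) < \<infinity>"
  shows "WIKS Q d w = (\<integral>p. cdf_w w (sup_dist d) (d (fst p) (snd p)) \<partial>Q)"
proof -
  interpret finite_measure Q by fact
  let ?Z = "zero_to (sup_dist d)" and ?W = "cdf_w w (sup_dist d)"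
  have "(\<integral>\<^sup>+ e. w e * indicator ?Z e * emeasure Q {p \<in> space Q. e < d (fst p) (snd p)} \<partial>lborel)
      = (\<integral>\<^sup>+ p. (\<integral>\<^sup>+ e. w e * indicator ?Z e * indicator {..d (fst p) (snd p)} e \<partial>lborel) \<partial>Q)"
    by (intro nn_integral_tail_emeasure D) measurable
  also have "\<dots> = (\<integral>\<^sup>+ p. ennreal (?W (d (fst p) (snd p))) \<partial>Q)"
    using finite_mass by (simp add: ennreal_cdf_w indicator_inter_arith mult.assoc)
  also have "\<dots> = ennreal (\<integral>p. ?W (d (fst p) (snd p)) \<partial>Q)"
    using finite_mass D
    by (intro nn_integral_eq_integral integrable_cdf_w_comp finite_measure_axioms)
      (auto simp: cdf_w_nonneg)
  finally show ?thesis
    by (simp add: WIKS_def integral_nonneg cdf_w_nonneg)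
qed

lemma post_risk_accept:
  "post_risk Q c0 c1 d w 0 = c0 * (\<integral>p. cdf_w w (sup_dist d) (d (fst p) (snd p)) \<partial>Q)"
  by (simp add: post_risk_def loss_def)

lemma post_risk_reject:
  assumes "prob_space Q" and "integrable Q (\<lambda>p. cdf_w w (sup_dist d) (d (fst p) (snd p)))"
  shows "post_risk Q c0 c1 d w 1
    = c1 * (1 - (\<integral>p. cdf_w w (sup_dist d) (d (fst p) (snd p)) \<partial>Q))"
proof -
  interpret prob_space Q by fact
  show ?thesis
    using assms(2) by (simp add: post_risk_def loss_def right_diff_distrib prob_space)
qed

lemma bayes_rejects_iff_expected_cdf_w:
  assumes "prob_space Q" and "integrable Q (\<lambda>p. cdf_w w (sup_dist d) (d (fst p) (snd p)))"
    and "c0 > 0" and "c1 > 0"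
  shows "bayes_rejects Q c0 c1 d w
    \<longleftrightarrow> c1 / (c1 + c0) < (\<integral>p. cdf_w w (sup_dist d) (d (fst p) (snd p)) \<partial>Q)"
  using \<open>c0 > 0\<close> \<open>c1 > 0\<close>
  unfolding bayes_rejects_def post_risk_accept post_risk_reject[OF assms(1,2)]
  by (simp add: pos_divide_less_eq algebra_simps)

theorem theorem3:
  fixes Q :: "('m \<times> 'm) measure" and d :: "'m \<Rightarrow> 'm \<Rightarrow> real"
    and w :: "real \<Rightarrow> ennreal" and c0 c1 :: real
  assumes "prob_space Q"
    and "(\<lambda>p. d (fst p) (snd p)) \<in> borel_measurable Q"
    and "\<And>p1 p2. d p1 p2 \<ge> 0"
    and "sup_dist d > 0"
    and "w \<in> borel_measurable lborel"
    and "\<And>e. e \<in> zero_to (sup_dist d) \<Longrightarrow> w e > 0"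
    and "(\<integral>\<^sup>+ e. w e * indicator (zero_to (sup_dist d)) e \<partial>lborel) = 1"
    and "c0 > 0" and "c1 > 0"
  shows "bayes_rejects Q c0 c1 d w \<longleftrightarrow> WIKS Q d w > c1 / (c1 + c0)"
proof -
  interpret prob_space Q by fact
  have finite_mass: "(\<integral>\<^sup>+ e. w e * indicator (zero_to (sup_dist d)) e \<partial>lborel) < \<infinity>"
    using assms(7) by simp
  have w_borel: "w \<in> borel_measurable borel"
    using assms(5) by simp
  have "bayes_rejects Q c0 c1 d w
      \<longleftrightarrow> c1 / (c1 + c0) < (\<integral>p. cdf_w w (sup_dist d) (d (fst p) (snd p)) \<partial>Q)"
    using finite_mass assms(2,8,9)
    by (intro bayes_rejects_iff_expected_cdf_w integrable_cdf_w_comp prob_space_axioms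
        finite_measure_axioms)
  also have "(\<integral>p. cdf_w w (sup_dist d) (d (fst p) (snd p)) \<partial>Q) = WIKS Q d w"
    using WIKS_eq_expectation_cdf_w[OF finite_measure_axioms assms(2) w_borel finite_mass] ..
  finally show ?thesis .
qed

end
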